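(* Consider the problem $\min_{x\in\mathbb{R}^n}\max_{y\in\Delta}F(x)^Ty$ and assume strict complementarity holds. For any $x^*$ for which some $y$ makes $(x^*,y)$ a stationary solution, there is exactly one $y\in\Delta$ such that $(x^*,y)$ is a stationary solution, and exactly one pair $(\mu,\nu)$ such that $(x^*,y,\mu,\nu)$ satisfies the KKT system.
   Context: $F(x)=(f_1(x),\dots,f_m(x))^T$ is a smooth map $\mathbb{R}^n\to\mathbb{R}^m$ and $\Delta$ the probability simplex in $\mathbb{R}^m$. KKT system for $(x^*,y,\mu,\nu)$: $\sum_iy_i\nabla f_i(x^* )=0$, $\sum_iy_i=1$, $y_i\ge0$, $\mu-\nu_i=f_i(x^* )$, $\nu_i\ge0$, $\nu_iy_i=0$ for all $i$; $(x^*,y)$ is a stationary solution if the KKT system has a solution $(\mu,\nu)$. Strict complementarity: for every solution of the KKT system, $\nu_i>0$ for all $i$ with $y_i=0$. *)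

theory Defs
  imports "HOL-Analysis.Analysis"
begin

text \<open>Components f i of F, indexed by a finite type 'm (so m = CARD('m) \<ge> 1);
  x ranges over real^'n (n = CARD('n)).\<close>

definition grad :: "(real^'n \<Rightarrow> real) \<Rightarrow> real^'n \<Rightarrow> real^'n" where
  "grad g x = (THE D. (g has_derivative (\<lambda>h. h \<bullet> D)) (at x))"

definition prob_simplex :: "('m::finite \<Rightarrow> real) set" where
  "prob_simplex = {y. (\<forall>i. 0 \<le> y i) \<and> (\<Sum>i\<in>UNIV. y i) = 1}"

definition KKT ::
  "('m::finite \<Rightarrow> real^'n \<Rightarrow> real) \<Rightarrow> real^'n \<Rightarrow> ('m \<Rightarrow> real) \<Rightarrow> real \<Rightarrow> ('m \<Rightarrow> real) \<Rightarrow> bool" where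
  "KKT f x y \<mu> \<nu> \<longleftrightarrow>
     (\<Sum>i\<in>UNIV. y i *\<^sub>R grad (f i) x) = 0 \<and>
     (\<Sum>i\<in>UNIV. y i) = 1 \<and> (\<forall>i. 0 \<le> y i) \<and>
     (\<forall>i. \<mu> - \<nu> i = f i x) \<and> (\<forall>i. 0 \<le> \<nu> i) \<and> (\<forall>i. \<nu> i * y i = 0)"

definition stationary ::
  "('m::finite \<Rightarrow> real^'n \<Rightarrow> real) \<Rightarrow> real^'n \<Rightarrow> ('m \<Rightarrow> real) \<Rightarrow> bool" where
  "stationary f x y \<longleftrightarrow> (\<exists>\<mu> \<nu>. KKT f x y \<mu> \<nu>)"

definition strict_complementarity :: "('m::finite \<Rightarrow> real^'n \<Rightarrow> real) \<Rightarrow> bool" where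
  "strict_complementarity f \<longleftrightarrow>
     (\<forall>x y \<mu> \<nu>. KKT f x y \<mu> \<nu> \<longrightarrow> (\<forall>i. y i = 0 \<longrightarrow> 0 < \<nu> i))"

end

theory Submission
  imports Defs
begin

(* Every KKT multiplier mu equals max_i f_i(x): it dominates every f_i(x) because
   nu >= 0, and it is attained at any index with y_i > 0. Hence (mu, nu) depends on x
   alone. For fixed multipliers the KKT conditions are linear in y, so if y1 ~= y2 were
   both KKT points, moving from y1 along the line through y2 until the first coordinate
   j with y1 j > 0 vanishes would give a KKT point with y j = 0 and nu j = 0
   (complementarity for y1), against strict complementarity. *)

lemma KKT_multipliers:
  assumes "KKT f x y \<mu> \<nu>"
  shows "\<mu> = (MAX i. f i x)" and "\<nu> = (\<lambda>i. (MAX i. f i x) - f i x)"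
proof -
  have sum_y: "(\<Sum>i\<in>UNIV. y i) = 1" and f_eq: "\<And>i. f i x = \<mu> - \<nu> i"
    and \<nu>_nonneg: "\<And>i. 0 \<le> \<nu> i" and compl: "\<And>i. \<nu> i * y i = 0"
    using assms unfolding KKT_def by auto
  obtain j where "y j \<noteq> 0"
    using sum_y by (metis (mono_tags) sum.neutral zero_neq_one)
  then have "f j x = \<mu>" using compl[of j] by (simp add: f_eq)
  moreover have "\<And>i. f i x \<le> \<mu>" using f_eq \<nu>_nonneg by simp
  ultimately show \<mu>_eq: "\<mu> = (MAX i. f i x)"
    by (intro Max_eqI[symmetric]) (auto intro: range_eqI)
  show "\<nu> = (\<lambda>i. (MAX i. f i x) - f i x)"
    unfolding \<mu>_eq[symmetric] by (simp add: fun_eq_iff f_eq)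
qed

lemma KKT_affine_combination:
  assumes "KKT f x y\<^sub>1 \<mu> \<nu>" and "KKT f x y\<^sub>2 \<mu> \<nu>"
    and "\<forall>i. 0 \<le> (1 - t) * y\<^sub>1 i + t * y\<^sub>2 i"
  shows "KKT f x (\<lambda>i. (1 - t) * y\<^sub>1 i + t * y\<^sub>2 i) \<mu> \<nu>"
proof -
  have "(\<Sum>i\<in>UNIV. ((1 - t) * y\<^sub>1 i + t * y\<^sub>2 i) *\<^sub>R grad (f i) x) =
        (1 - t) *\<^sub>R (\<Sum>i\<in>UNIV. y\<^sub>1 i *\<^sub>R grad (f i) x) + t *\<^sub>R (\<Sum>i\<in>UNIV. y\<^sub>2 i *\<^sub>R grad (f i) x)"
    by (simp add: scaleR_add_left scaleR_sum_right sum.distrib)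
  moreover have "(\<Sum>i\<in>UNIV. (1 - t) * y\<^sub>1 i + t * y\<^sub>2 i) =
        (1 - t) * (\<Sum>i\<in>UNIV. y\<^sub>1 i) + t * (\<Sum>i\<in>UNIV. y\<^sub>2 i)"
    by (simp add: sum.distrib sum_distrib_left)
  moreover have "\<nu> i * ((1 - t) * y\<^sub>1 i + t * y\<^sub>2 i) = (1 - t) * (\<nu> i * y\<^sub>1 i) + t * (\<nu> i * y\<^sub>2 i)"
    for i by (simp add: algebra_simps)
  ultimately show ?thesis
    using assms unfolding KKT_def by auto
qed

lemma line_leaves_nonneg_orthant:
  fixes y\<^sub>1 y\<^sub>2 :: "'a::finite \<Rightarrow> real"
  assumes nonneg: "\<forall>i. 0 \<le> y\<^sub>1 i" and nonneg\<^sub>2: "\<forall>i. 0 \<le> y\<^sub>2 i"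
    and "\<exists>i. y\<^sub>2 i < y\<^sub>1 i"
  obtains t j where "0 < y\<^sub>1 j" and "(1 - t) * y\<^sub>1 j + t * y\<^sub>2 j = 0"
    and "\<forall>i. 0 \<le> (1 - t) * y\<^sub>1 i + t * y\<^sub>2 i"
proof -
  define S where "S = {i. y\<^sub>2 i < y\<^sub>1 i}"
  define r where "r i = y\<^sub>1 i / (y\<^sub>1 i - y\<^sub>2 i)" for i
  have "S \<noteq> {}" using assms(3) by (auto simp: S_def)
  then obtain j where "j \<in> S" and j_min: "\<And>i. i \<in> S \<Longrightarrow> r j \<le> r i"
    using ex_is_arg_min_if_finite[of S r] by (auto simp: is_arg_min_linorder)
  then have j_gap: "0 < y\<^sub>1 j - y\<^sub>2 j" by (simp add: S_def)
  have "0 < y\<^sub>1 j"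
    using \<open>j \<in> S\<close> nonneg\<^sub>2 by (auto simp: S_def intro: order.strict_trans1)
  moreover have "(1 - r j) * y\<^sub>1 j + r j * y\<^sub>2 j = 0"
    using j_gap by (simp add: r_def field_simps)
  moreover have "0 \<le> (1 - r j) * y\<^sub>1 i + r j * y\<^sub>2 i" for i
  proof (cases "i \<in> S")
    case True
    then have "r j * (y\<^sub>1 i - y\<^sub>2 i) \<le> y\<^sub>1 i"
      using j_min[OF True] by (simp add: S_def r_def pos_le_divide_eq)
    then show ?thesis by (simp add: algebra_simps)
  next
    case False
    moreover have "0 \<le> r j" using j_gap nonneg by (simp add: r_def)
    ultimately have "0 \<le> r j * (y\<^sub>2 i - y\<^sub>1 i)" by (simp add: S_def)
    then show ?thesis using nonneg[rule_format, of i] by (simp add: algebra_simps)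
  qed
  ultimately show thesis using that by blast
qed

lemma exists_less_if_sum_eq:
  fixes y\<^sub>1 y\<^sub>2 :: "'a::finite \<Rightarrow> real"
  assumes "(\<Sum>i\<in>UNIV. y\<^sub>1 i) = (\<Sum>i\<in>UNIV. y\<^sub>2 i)" and "y\<^sub>1 \<noteq> y\<^sub>2"
  shows "\<exists>i. y\<^sub>2 i < y\<^sub>1 i"
proof (rule ccontr)
  assume "\<not> (\<exists>i. y\<^sub>2 i < y\<^sub>1 i)"
  then have "\<forall>i\<in>UNIV. y\<^sub>1 i \<le> y\<^sub>2 i" by (simp add: not_less)
  moreover from this \<open>y\<^sub>1 \<noteq> y\<^sub>2\<close> have "\<exists>i\<in>UNIV. y\<^sub>1 i < y\<^sub>2 i"
    by (metis UNIV_I antisym ext not_less)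
  ultimately have "(\<Sum>i\<in>UNIV. y\<^sub>1 i) < (\<Sum>i\<in>UNIV. y\<^sub>2 i)"
    by (intro sum_strict_mono_ex1) auto
  with assms(1) show False by simp
qed

lemma KKT_primal_unique:
  assumes sc: "strict_complementarity f"
    and KKT\<^sub>1: "KKT f x y\<^sub>1 \<mu>\<^sub>1 \<nu>\<^sub>1" and KKT\<^sub>2: "KKT f x y\<^sub>2 \<mu>\<^sub>2 \<nu>\<^sub>2"
  shows "y\<^sub>1 = y\<^sub>2"
proof (rule ccontr)
  assume "y\<^sub>1 \<noteq> y\<^sub>2"
  have KKT\<^sub>2': "KKT f x y\<^sub>2 \<mu>\<^sub>1 \<nu>\<^sub>1"
    using KKT\<^sub>2 KKT_multipliers[OF KKT\<^sub>1] KKT_multipliers[OF KKT\<^sub>2] by simp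
  have "\<forall>i. 0 \<le> y\<^sub>1 i" and "\<forall>i. 0 \<le> y\<^sub>2 i" and "\<exists>i. y\<^sub>2 i < y\<^sub>1 i"
    using KKT\<^sub>1 KKT\<^sub>2 \<open>y\<^sub>1 \<noteq> y\<^sub>2\<close> exists_less_if_sum_eq[of y\<^sub>1 y\<^sub>2] unfolding KKT_def by auto
  then obtain t j where "0 < y\<^sub>1 j" and vanish: "(1 - t) * y\<^sub>1 j + t * y\<^sub>2 j = 0"
    and nonneg: "\<forall>i. 0 \<le> (1 - t) * y\<^sub>1 i + t * y\<^sub>2 i"
    by (rule line_leaves_nonneg_orthant)
  have "KKT f x (\<lambda>i. (1 - t) * y\<^sub>1 i + t * y\<^sub>2 i) \<mu>\<^sub>1 \<nu>\<^sub>1"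
    using KKT_affine_combination[OF KKT\<^sub>1 KKT\<^sub>2' nonneg] .
  with sc vanish have "0 < \<nu>\<^sub>1 j" unfolding strict_complementarity_def by blast
  moreover have "\<nu>\<^sub>1 j = 0" using KKT\<^sub>1 \<open>0 < y\<^sub>1 j\<close> unfolding KKT_def by auto
  ultimately show False by simp
qed

lemma KKT_prob_simplex: "KKT f x y \<mu> \<nu> \<Longrightarrow> y \<in> prob_simplex"
  unfolding KKT_def prob_simplex_def by auto

theorem corollary1:
  fixes f :: "'m::finite \<Rightarrow> real^'n \<Rightarrow> real" and xs :: "real^'n"
  assumes smooth: "\<And>i x. f i differentiable (at x)"
    and sc: "strict_complementarity f"
    and ex: "\<exists>y. stationary f xs y"
  shows "(\<exists>!y. y \<in> prob_simplex \<and> stationary f xs y) \<and>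
         (\<forall>y. stationary f xs y \<longrightarrow> (\<exists>!p. KKT f xs y (fst p) (snd p)))"
proof
  show "\<exists>!y. y \<in> prob_simplex \<and> stationary f xs y"
    using ex KKT_prob_simplex KKT_primal_unique[OF sc] unfolding stationary_def by metis
  show "\<forall>y. stationary f xs y \<longrightarrow> (\<exists>!p. KKT f xs y (fst p) (snd p))"
  proof (intro allI impI)
    fix y assume "stationary f xs y"
    then obtain \<mu> \<nu> where "KKT f xs y \<mu> \<nu>" unfolding stationary_def by blast
    then show "\<exists>!p. KKT f xs y (fst p) (snd p)"
      by (intro ex1I[of _ "(\<mu>, \<nu>)"]) (auto simp: prod_eq_iff dest: KKT_multipliers)
  qed
qed

end
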